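(* In the standing setup, assume the element $j\in G$ with $\rho(j)=\mathrm{diag}(e^{2\pi iq_1},\dots,e^{2\pi iq_n})$ exists, and fix $\sigma\in\mathrm{Hom}(G,\mathbb{Z}/2\mathbb{Z})$. If $\sigma(h)(\sigma(j)+1)\equiv 0 \pmod 2$ for all $h\in G$ (which holds for instance if $\sigma(j)=1$ or $\sigma\equiv 0$), then for every $h\in G$ and every homogeneous $a\in M_{f_h}$, $$\varphi(h^{-1}j)(a1_h)=e^{2\pi i(\deg a+s_h)}\,a1_h,$$ i.e. $\varphi(h^{-1}j)|_{A_h}=\exp(2\pi i\mathcal{Q})|_{A_h}$ where $\mathcal{Q}(a1_h)=(\deg a+s_h)a1_h$; thus $GM_f$ is $G$-Euler.
   Context: Standing setup. Let $f\in\mathbb{C}[z_1,\dots,z_n]$ be quasi-homogeneous with an isolated singularity at $0$, with weights $q_i\in(0,1)$ (so $f(e^{tq_1}z_1,\dots,e^{tq_n}z_n)=e^tf(z)$); $M_f=\mathbb{C}[z]/(\partial_1f,\dots,\partial_nf)$ graded by $\deg z_i=q_i$. $G$ is a finite abelian group with a diagonal representation $\rho:G\to GL(n,\mathbb{C})$ leaving $f$ invariant; $\rho(g)=\mathrm{diag}(e^{2\pi i\nu_i(g)})$ with $\nu_i(g)\in[0,1)$; $\mathrm{Fix}(g)$ is the span of the $z_i$ with $\nu_i(g)=0$, $f_g=f|_{\mathrm{Fix}(g)}$, $A_g=M_{f_g}$ (equal to $\mathbb{C}$ if $\mathrm{Fix}(g)=0$) with elements $a1_g$, and $GM_f=\bigoplus_gA_g$.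 Shift $s_g=\sum_{i:\nu_i(g)\ne0}(\nu_i(g)-q_i)$. Given $\sigma\in\mathrm{Hom}(G,\mathbb{Z}/2\mathbb{Z})$, the $G$-action on $GM_f$ is $$\varphi(h)(a1_g)=(-1)^{\sigma(h)\sigma(g)}\det(\rho(h))^{-1}\det(\rho(h)|_{\mathrm{Fix}(g)})\,(a\circ\rho(h))\,1_g,$$ where $(a\circ\rho(h))(z)=a(\rho(h)z)$ and the determinant of the restriction to the zero space is $1$. $GM_f$ is called $G$-Euler if there is a central $j$ with $\varphi(h^{-1}j)|_{A_h}=\exp(2\pi i\mathcal{Q})|_{A_h}$ for all $h$. *)

theory Defs
  imports "HOL-Analysis.Analysis" "HOL-Algebra.Elementary_Groups"
begin

text \<open>Points of C^n are functions 'n => complex on a finite index type 'n;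
 polynomials are polynomial functions.  Diagonal representation:
 rho(g) = diag(exp(2 pi i nu_i(g))).\<close>

definition rho :: "('g \<Rightarrow> 'n \<Rightarrow> real) \<Rightarrow> 'g \<Rightarrow> 'n \<Rightarrow> complex" where
  "rho \<nu> g i = cis (2 * pi * \<nu> g i)"

definition act :: "('n \<Rightarrow> complex) \<Rightarrow> ('n \<Rightarrow> complex) \<Rightarrow> ('n \<Rightarrow> complex)" where
  "act D z = (\<lambda>i. D i * z i)"

definition Fix :: "('g \<Rightarrow> 'n \<Rightarrow> real) \<Rightarrow> 'g \<Rightarrow> 'n set" where
  "Fix \<nu> g = {i. \<nu> g i = 0}"

definition monom :: "('n::finite \<Rightarrow> nat) \<Rightarrow> ('n \<Rightarrow> complex) \<Rightarrow> complex" where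
  "monom m z = (\<Prod>i\<in>UNIV. z i ^ m i)"

definition polys :: "'n::finite set \<Rightarrow> (('n \<Rightarrow> complex) \<Rightarrow> complex) set" where
  "polys I = {p. \<exists>M c. finite M \<and> (\<forall>m\<in>M. \<forall>i. i \<notin> I \<longrightarrow> m i = 0)
                      \<and> p = (\<lambda>z. \<Sum>m\<in>M. c m * monom m z)}"

definition restr :: "'n set \<Rightarrow> (('n \<Rightarrow> complex) \<Rightarrow> complex) \<Rightarrow> ('n \<Rightarrow> complex) \<Rightarrow> complex" where
  "restr I F = (\<lambda>z. F (\<lambda>i. if i \<in> I then z i else 0))"

definition pd :: "'n \<Rightarrow> (('n \<Rightarrow> complex) \<Rightarrow> complex) \<Rightarrow> ('n \<Rightarrow> complex) \<Rightarrow> complex" where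
  "pd i F z = deriv (\<lambda>w. F (z(i := w))) (z i)"

definition qhom :: "('n \<Rightarrow> real) \<Rightarrow> real \<Rightarrow> (('n \<Rightarrow> complex) \<Rightarrow> complex) \<Rightarrow> bool" where
  "qhom q d a \<longleftrightarrow> (\<forall>t::real. \<forall>z. a (\<lambda>i. complex_of_real (exp (t * q i)) * z i)
                                 = complex_of_real (exp (t * d)) * a z)"

definition jac_ideal :: "'n::finite set \<Rightarrow> (('n \<Rightarrow> complex) \<Rightarrow> complex) \<Rightarrow> (('n \<Rightarrow> complex) \<Rightarrow> complex) set" where
  "jac_ideal I F = {p. \<exists>b. (\<forall>i\<in>I. b i \<in> polys I) \<and> p = (\<lambda>z. \<Sum>i\<in>I. b i z * pd i F z)}"

definition jclass :: "'n::finite set \<Rightarrow> (('n \<Rightarrow> complex) \<Rightarrow> complex) \<Rightarrow> (('n \<Rightarrow> complex) \<Rightarrow> complex)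
                     \<Rightarrow> (('n \<Rightarrow> complex) \<Rightarrow> complex) set" where
  "jclass I F a = {b \<in> polys I. (\<lambda>z. a z - b z) \<in> jac_ideal I F}"

definition jac_ring :: "'n::finite set \<Rightarrow> (('n \<Rightarrow> complex) \<Rightarrow> complex) \<Rightarrow> (('n \<Rightarrow> complex) \<Rightarrow> complex) set set" where
  "jac_ring I F = jclass I F ` polys I"

definition hom_class :: "('n \<Rightarrow> real) \<Rightarrow> real \<Rightarrow> (('n \<Rightarrow> complex) \<Rightarrow> complex) set \<Rightarrow> bool" where
  "hom_class q d c \<longleftrightarrow> (\<exists>a\<in>c. qhom q d a)"

definition A :: "('g \<Rightarrow> 'n::finite \<Rightarrow> real) \<Rightarrow> (('n \<Rightarrow> complex) \<Rightarrow> complex) \<Rightarrow> 'g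
                 \<Rightarrow> (('n \<Rightarrow> complex) \<Rightarrow> complex) set set" where
  "A \<nu> f g = jac_ring (Fix \<nu> g) (restr (Fix \<nu> g) f)"

definition shift :: "('n::finite \<Rightarrow> real) \<Rightarrow> ('g \<Rightarrow> 'n \<Rightarrow> real) \<Rightarrow> 'g \<Rightarrow> real" where
  "shift q \<nu> g = (\<Sum>i\<in>UNIV - Fix \<nu> g. \<nu> g i - q i)"

text \<open>The action phi(h) on the summand a 1_g (elements of GM_f are pairs (g, class in A_g)).
 det(rho(h)) is the product of its diagonal entries; det of the restriction to Fix(g)
 is the product over Fix(g) (empty product 1).\<close>
definition phi :: "('g \<Rightarrow> 'n::finite \<Rightarrow> real) \<Rightarrow> ('g \<Rightarrow> int) \<Rightarrow> (('n \<Rightarrow> complex) \<Rightarrow> complex)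
                   \<Rightarrow> 'g \<Rightarrow> 'g \<times> (('n \<Rightarrow> complex) \<Rightarrow> complex) set
                   \<Rightarrow> 'g \<times> (('n \<Rightarrow> complex) \<Rightarrow> complex) set" where
  "phi \<nu> \<sigma> f h x = (let g = fst x; c = snd x; a = (SOME a. a \<in> c);
       k = (-1::complex) ^ nat (\<sigma> h * \<sigma> g) * inverse (\<Prod>i\<in>UNIV. rho \<nu> h i)
             * (\<Prod>i\<in>Fix \<nu> g. rho \<nu> h i)
     in (g, jclass (Fix \<nu> g) (restr (Fix \<nu> g) f) (\<lambda>z. k * a (act (rho \<nu> h) z))))"

text \<open>exp(2 pi i Q) on a homogeneous element a 1_h of degree d.\<close>
definition scale_class :: "complex \<Rightarrow> (('n \<Rightarrow> complex) \<Rightarrow> complex) set \<Rightarrow> (('n \<Rightarrow> complex) \<Rightarrow> complex) set" where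
  "scale_class k c = (\<lambda>b z. k * b z) ` c"

definition G_Euler :: "('g, 'b) monoid_scheme \<Rightarrow> ('n::finite \<Rightarrow> real) \<Rightarrow> ('g \<Rightarrow> 'n \<Rightarrow> real)
                        \<Rightarrow> ('g \<Rightarrow> int) \<Rightarrow> (('n \<Rightarrow> complex) \<Rightarrow> complex) \<Rightarrow> bool" where
  "G_Euler G q \<nu> \<sigma> f \<longleftrightarrow> (\<exists>j\<in>carrier G. (\<forall>g\<in>carrier G. g \<otimes>\<^bsub>G\<^esub> j = j \<otimes>\<^bsub>G\<^esub> g) \<and>
     (\<forall>h\<in>carrier G. \<forall>d c. c \<in> A \<nu> f h \<and> hom_class q d c \<longrightarrow>
        phi \<nu> \<sigma> f (inv\<^bsub>G\<^esub> h \<otimes>\<^bsub>G\<^esub> j) (h, c)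
          = (h, scale_class (cis (2 * pi * (d + shift q \<nu> h))) c)))"

end

theory Submission
  imports Defs "HOL-Complex_Analysis.Conformal_Mappings"
begin

text \<open>
  Put \<open>g = h\<inverse> j\<close> and \<open>D = \<rho>(g)\<close>.  On \<open>Fix(h)\<close> the matrix \<open>\<rho>(h)\<close> is trivial, so there \<open>D\<close>
  acts as \<open>\<rho>(j) = diag(exp(2\<pi>i q\<^sub>k))\<close>.  By quasi-homogeneity it therefore multiplies a
  representative of degree \<open>d\<close> by \<open>exp(2\<pi>i d)\<close>; and since \<open>D\<close> preserves \<open>f\<^sub>h\<close>, by the chain rule it
  preserves the Jacobian ideal of \<open>f\<^sub>h\<close>, so this passes to residue classes.  Off \<open>Fix(h)\<close> the
  eigenvalues of \<open>D\<close> are \<open>exp(2\<pi>i(q\<^sub>k - \<nu>\<^sub>k(h)))\<close>, so the determinant factor of \<open>\<phi>(g)\<close> is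
  \<open>exp(2\<pi>i s\<^sub>h)\<close>.  The sign \<open>(-1)^(\<sigma>(g)\<sigma>(h))\<close> is trivial because
  \<open>\<sigma>(g)\<sigma>(h) \<equiv> \<sigma>(h)(\<sigma>(j) + 1) mod 2\<close>.
\<close>

lemma polys_eq_if_vars_eq:
  assumes "p \<in> polys I" "\<forall>i\<in>I. z i = w i"
  shows "p z = p w"
proof -
  obtain M c where M: "\<forall>m\<in>M. \<forall>i. i \<notin> I \<longrightarrow> m i = 0" "p = (\<lambda>z. \<Sum>m\<in>M. c m * monom m z)"
    using assms(1) unfolding polys_def by blast
  have "monom m z = monom m w" if "m \<in> M" for m
    unfolding monom_def using M(1) that assms(2) by (intro prod.cong refl) (metis power_0)
  then show ?thesis using M(2) by simp
qed

lemma polys_diff: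
  assumes "p \<in> polys I" "r \<in> polys I"
  shows "(\<lambda>z. p z - r z) \<in> polys I"
proof -
  obtain M c where M: "finite M" "\<forall>m\<in>M. \<forall>i. i \<notin> I \<longrightarrow> m i = 0"
     "p = (\<lambda>z. \<Sum>m\<in>M. c m * monom m z)" using assms(1) unfolding polys_def by blast
  obtain N e where N: "finite N" "\<forall>m\<in>N. \<forall>i. i \<notin> I \<longrightarrow> m i = 0"
     "r = (\<lambda>z. \<Sum>m\<in>N. e m * monom m z)" using assms(2) unfolding polys_def by blast
  have p_ext: "p z = (\<Sum>m\<in>M \<union> N. (if m \<in> M then c m else 0) * monom m z)" for z
    unfolding M(3) using M(1) N(1) by (intro sum.mono_neutral_cong_left) auto
  have r_ext: "r z = (\<Sum>m\<in>M \<union> N. (if m \<in> N then e m else 0) * monom m z)" for z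
    unfolding N(3) using M(1) N(1) by (intro sum.mono_neutral_cong_left) auto
  define c' where "c' = (\<lambda>m. (if m \<in> M then c m else 0) - (if m \<in> N then e m else 0))"
  have "(\<lambda>z. p z - r z) = (\<lambda>z. \<Sum>m\<in>M \<union> N. c' m * monom m z)"
    unfolding p_ext r_ext c'_def by (simp add: sum_subtractf left_diff_distrib)
  moreover have "finite (M \<union> N)" "\<forall>m\<in>M \<union> N. \<forall>i. i \<notin> I \<longrightarrow> m i = 0"
    using M(1,2) N(1,2) by auto
  ultimately show ?thesis
    unfolding polys_def mem_Collect_eq by (intro exI[of _ "M \<union> N"] exI[of _ c']) simp
qed

lemma polys_cmult:
  assumes "p \<in> polys I"
  shows "(\<lambda>z. K * p z) \<in> polys I"
proof -
  obtain M c where M: "finite M" "\<forall>m\<in>M. \<forall>i. i \<notin> I \<longrightarrow> m i = 0"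
     "p = (\<lambda>z. \<Sum>m\<in>M. c m * monom m z)" using assms unfolding polys_def by blast
  have "(\<lambda>z. K * p z) = (\<lambda>z. \<Sum>m\<in>M. (K * c m) * monom m z)"
    unfolding M(3) by (simp add: sum_distrib_left mult.assoc)
  then show ?thesis
    unfolding polys_def mem_Collect_eq using M(1,2)
    by (intro exI[of _ M] exI[of _ "\<lambda>m. K * c m"]) simp
qed

lemma monom_act: "monom m (act D z) = monom m D * monom m z"
  unfolding monom_def act_def by (simp add: power_mult_distrib prod.distrib)

lemma polys_act:
  assumes "p \<in> polys I"
  shows "(\<lambda>z. p (act D z)) \<in> polys I"
proof -
  obtain M c where M: "finite M" "\<forall>m\<in>M. \<forall>i. i \<notin> I \<longrightarrow> m i = 0"
     "p = (\<lambda>z. \<Sum>m\<in>M. c m * monom m z)" using assms unfolding polys_def by blast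
  have "(\<lambda>z. p (act D z)) = (\<lambda>z. \<Sum>m\<in>M. (c m * monom m D) * monom m z)"
    unfolding M(3) by (simp add: monom_act mult.assoc)
  then show ?thesis
    unfolding polys_def mem_Collect_eq using M(1,2)
    by (intro exI[of _ M] exI[of _ "\<lambda>m. c m * monom m D"]) simp
qed

lemma restr_eq_act: "restr I F = (\<lambda>z. F (act (\<lambda>i. if i \<in> I then 1 else 0) z))"
  unfolding restr_def act_def by (rule ext, rule arg_cong[where f = F]) (simp add: fun_eq_iff)

lemma restr_act_invariant:
  assumes "\<And>z. F (act D z) = F z"
  shows "restr I F (act D z) = restr I F z"
proof -
  have "restr I F (act D z) = F (act D (act (\<lambda>i. if i \<in> I then 1 else 0) z))"
    unfolding restr_eq_act act_def by (simp add: mult.left_commute)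
  also have "\<dots> = restr I F z"
    unfolding restr_eq_act assms ..
  finally show ?thesis .
qed

lemma polys_holomorphic:
  assumes "p \<in> polys I" "\<And>k. g k holomorphic_on S"
  shows "(\<lambda>t. p (\<lambda>k. g k t)) holomorphic_on S"
proof -
  obtain M c where "p = (\<lambda>z. \<Sum>m\<in>M. c m * monom m z)"
    using assms(1) unfolding polys_def by blast
  then show ?thesis
    unfolding monom_def by (simp only:) (intro holomorphic_intros assms(2))
qed

lemma polys_holomorphic_coordinate:
  assumes "p \<in> polys I"
  shows "(\<lambda>u. p (z(i := u))) holomorphic_on UNIV"
proof -
  have "(\<lambda>u. (z(i := u)) k) holomorphic_on UNIV" for k
    by (cases "k = i") (simp_all add: holomorphic_on_id holomorphic_on_const)
  from polys_holomorphic[OF assms, of "\<lambda>k u. (z(i := u)) k", OF this] show ?thesis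
    by (simp add: fun_upd_def)
qed

lemma polys_zero: "(\<lambda>z. 0) \<in> polys I"
  unfolding polys_def by (intro CollectI exI[of _ "{}"]) simp

lemma jac_ideal_zero: "(\<lambda>z. 0) \<in> jac_ideal (I::'n::finite set) F"
  unfolding jac_ideal_def by (intro CollectI exI[of _ "\<lambda>i z. 0"]) (simp add: polys_zero)

lemma jac_ideal_diff:
  assumes "x \<in> jac_ideal (I::'n::finite set) F" "y \<in> jac_ideal I F"
  shows "(\<lambda>z. x z - y z) \<in> jac_ideal I F"
proof -
  obtain b where b: "\<forall>i\<in>I. b i \<in> polys I" "x = (\<lambda>z. \<Sum>i\<in>I. b i z * pd i F z)"
    using assms(1) unfolding jac_ideal_def by blast
  obtain b' where b': "\<forall>i\<in>I. b' i \<in> polys I" "y = (\<lambda>z. \<Sum>i\<in>I. b' i z * pd i F z)"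
    using assms(2) unfolding jac_ideal_def by blast
  have "(\<lambda>z. x z - y z) = (\<lambda>z. \<Sum>i\<in>I. (b i z - b' i z) * pd i F z)"
    unfolding b(2) b'(2) by (simp add: sum_subtractf left_diff_distrib)
  moreover have "\<forall>i\<in>I. (\<lambda>z. b i z - b' i z) \<in> polys I"
    using b(1) b'(1) polys_diff by blast
  ultimately show ?thesis
    unfolding jac_ideal_def mem_Collect_eq by (intro exI[of _ "\<lambda>i z. b i z - b' i z"]) simp
qed

lemma jac_ideal_cmult:
  assumes "x \<in> jac_ideal (I::'n::finite set) F"
  shows "(\<lambda>z. K * x z) \<in> jac_ideal I F"
proof -
  obtain b where b: "\<forall>i\<in>I. b i \<in> polys I" "x = (\<lambda>z. \<Sum>i\<in>I. b i z * pd i F z)"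
    using assms unfolding jac_ideal_def by blast
  have "(\<lambda>z. K * x z) = (\<lambda>z. \<Sum>i\<in>I. (K * b i z) * pd i F z)"
    unfolding b(2) by (simp add: sum_distrib_left mult.assoc)
  moreover have "\<forall>i\<in>I. (\<lambda>z. K * b i z) \<in> polys I"
    using b(1) polys_cmult by blast
  ultimately show ?thesis
    unfolding jac_ideal_def mem_Collect_eq by (intro exI[of _ "\<lambda>i z. K * b i z"]) simp
qed

lemma pd_act:
  assumes inv: "\<And>z. F (act D z) = F z" and nz: "D i \<noteq> 0"
    and hol: "(\<lambda>u. F (z(i := u))) holomorphic_on UNIV"
  shows "pd i F (act D z) = inverse (D i) * pd i F z"
proof -
  define \<psi> where "\<psi> = (\<lambda>u. F (z(i := u)))"
  have upd: "(act D z)(i := w) = act D (z(i := w / D i))" for w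
    using nz unfolding act_def by (auto simp: fun_eq_iff)
  have restrict: "(\<lambda>w. F ((act D z)(i := w))) = (\<lambda>w. \<psi> (w / D i))"
    unfolding \<psi>_def by (simp add: upd inv)
  have "act D z i / D i = z i"
    using nz unfolding act_def by simp
  moreover have "(\<psi> has_field_derivative deriv \<psi> (z i)) (at (z i))"
    using hol[folded \<psi>_def] open_UNIV by (rule holomorphic_derivI) simp
  ultimately have "(\<psi> has_field_derivative deriv \<psi> (z i)) (at (act D z i / D i))"
    by simp
  then have "((\<lambda>w. \<psi> (w / D i)) has_field_derivative deriv \<psi> (z i) * inverse (D i)) (at (act D z i))"
    by (rule DERIV_chain2) (auto intro!: derivative_eq_intros simp: field_simps nz)
  then show ?thesis
    unfolding pd_def restrict \<psi>_def by (simp add: DERIV_imp_deriv)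
qed

lemma jac_ideal_act:
  assumes x: "x \<in> jac_ideal (I::'n::finite set) F"
    and inv: "\<And>z. F (act D z) = F z" and nz: "\<And>i. D i \<noteq> 0"
    and hol: "\<And>i z. i \<in> I \<Longrightarrow> (\<lambda>u. F (z(i := u))) holomorphic_on UNIV"
  shows "(\<lambda>z. x (act D z)) \<in> jac_ideal I F"
proof -
  obtain b where b: "\<forall>i\<in>I. b i \<in> polys I" "x = (\<lambda>z. \<Sum>i\<in>I. b i z * pd i F z)"
    using x unfolding jac_ideal_def by blast
  have "(\<lambda>z. x (act D z)) = (\<lambda>z. \<Sum>i\<in>I. (inverse (D i) * b i (act D z)) * pd i F z)"
    unfolding b(2) using pd_act[OF inv nz hol] by (auto intro!: sum.cong simp: fun_eq_iff)
  moreover have "\<forall>i\<in>I. (\<lambda>z. inverse (D i) * b i (act D z)) \<in> polys I"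
    using b(1) polys_cmult polys_act by blast
  ultimately show ?thesis
    unfolding jac_ideal_def mem_Collect_eq
    by (intro exI[of _ "\<lambda>i z. inverse (D i) * b i (act D z)"]) simp
qed

lemma jclass_eq:
  assumes "(\<lambda>z. x z - y z) \<in> jac_ideal (I::'n::finite set) F"
  shows "jclass I F x = jclass I F y"
proof -
  have "(\<lambda>z. x z - b z) \<in> jac_ideal I F \<longleftrightarrow> (\<lambda>z. y z - b z) \<in> jac_ideal I F" for b
  proof
    assume "(\<lambda>z. x z - b z) \<in> jac_ideal I F"
    from jac_ideal_diff[OF this assms] show "(\<lambda>z. y z - b z) \<in> jac_ideal I F" by simp
  next
    assume "(\<lambda>z. y z - b z) \<in> jac_ideal I F"
    from jac_ideal_diff[OF this jac_ideal_diff[OF jac_ideal_zero assms]]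
    show "(\<lambda>z. x z - b z) \<in> jac_ideal I F" by simp
  qed
  then show ?thesis
    unfolding jclass_def by auto
qed

lemma jac_ring_eq_jclass:
  assumes "c \<in> jac_ring (I::'n::finite set) F" "b \<in> c"
  shows "c = jclass I F b"
proof -
  obtain p where c: "c = jclass I F p"
    using assms(1) unfolding jac_ring_def by blast
  with assms(2) have "(\<lambda>z. p z - b z) \<in> jac_ideal I F"
    unfolding jclass_def by blast
  then show ?thesis
    unfolding c by (rule jclass_eq)
qed

lemma scale_class_jclass:
  assumes K: "K \<noteq> 0"
  shows "scale_class K (jclass (I::'n::finite set) F x) = jclass I F (\<lambda>z. K * x z)"
proof
  show "scale_class K (jclass I F x) \<subseteq> jclass I F (\<lambda>z. K * x z)"
  proof
    fix c assume "c \<in> scale_class K (jclass I F x)"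
    then obtain b where b: "b \<in> polys I" "(\<lambda>z. x z - b z) \<in> jac_ideal I F"
      and c: "c = (\<lambda>z. K * b z)"
      unfolding scale_class_def jclass_def by auto
    have "(\<lambda>z. K * x z - c z) \<in> jac_ideal I F"
      using jac_ideal_cmult[OF b(2), of K] unfolding c by (simp add: right_diff_distrib)
    then show "c \<in> jclass I F (\<lambda>z. K * x z)"
      unfolding jclass_def c using polys_cmult[OF b(1)] by simp
  qed
next
  show "jclass I F (\<lambda>z. K * x z) \<subseteq> scale_class K (jclass I F x)"
  proof
    fix c assume "c \<in> jclass I F (\<lambda>z. K * x z)"
    then have c: "c \<in> polys I" "(\<lambda>z. K * x z - c z) \<in> jac_ideal I F"
      unfolding jclass_def by auto
    have "(\<lambda>z. inverse K * (K * x z - c z)) = (\<lambda>z. x z - inverse K * c z)"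
      using K by (auto simp: fun_eq_iff field_simps)
    then have "(\<lambda>z. inverse K * c z) \<in> jclass I F x"
      using jac_ideal_cmult[OF c(2), of "inverse K"] polys_cmult[OF c(1)]
      unfolding jclass_def by simp
    moreover have "c = (\<lambda>z. K * (inverse K * c z))"
      using K by (auto simp: fun_eq_iff)
    ultimately show "c \<in> scale_class K (jclass I F x)"
      unfolding scale_class_def by (metis image_eqI)
  qed
qed

lemma islimpt_Reals_zero: "(0::complex) islimpt \<real>"
  unfolding islimpt_approachable
proof (intro allI impI)
  fix e :: real assume "0 < e"
  then show "\<exists>x'\<in>\<real>. x' \<noteq> 0 \<and> dist x' (0::complex) < e"
    by (intro bexI[of _ "complex_of_real (e / 2)"]) (auto simp: dist_norm)
qed

text \<open>The identity \<open>a(exp(t q) z) = exp(t d) a(z)\<close> for real \<open>t\<close> extends to complex \<open>t\<close> by the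
  identity theorem; then take \<open>t = 2\<pi>i\<close>.\<close>
lemma qhom_cis:
  assumes a: "a \<in> polys I" and qh: "qhom q d a"
  shows "a (\<lambda>i. cis (2 * pi * q i) * z i) = cis (2 * pi * d) * a z"
proof -
  define H where
    "H = (\<lambda>t::complex. a (\<lambda>i. exp (t * of_real (q i)) * z i) - exp (t * of_real d) * a z)"
  have hol: "H holomorphic_on UNIV"
    unfolding H_def by (intro holomorphic_intros polys_holomorphic[OF a])
  have H0: "H u = 0" if "u \<in> \<real>" for u
  proof -
    from that obtain t where t: "u = of_real t" by (rule Reals_cases)
    have "exp (u * of_real r) = complex_of_real (exp (t * r))" for r
      unfolding t by (metis exp_of_real of_real_mult)
    with qh show ?thesis
      unfolding H_def qhom_def by simp
  qed
  have "H (\<i> * of_real (2 * pi)) = 0"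
    by (rule analytic_continuation[OF hol open_UNIV connected_UNIV subset_UNIV UNIV_I
          islimpt_Reals_zero H0 UNIV_I])
  then show ?thesis
    unfolding H_def cis_conv_exp by (simp add: mult_ac)
qed

lemma jclass_act_hom_class:
  assumes c: "c \<in> jac_ring (I::'n::finite set) F" "hom_class q d c" "a \<in> c"
    and inv: "\<And>z. F (act D z) = F z" and nz: "\<And>i. D i \<noteq> 0"
    and hol: "\<And>i z. i \<in> I \<Longrightarrow> (\<lambda>u. F (z(i := u))) holomorphic_on UNIV"
    and D_Fix: "\<And>i. i \<in> I \<Longrightarrow> D i = cis (2 * pi * q i)"
    and k: "k \<noteq> 0"
  shows "jclass I F (\<lambda>z. k * a (act D z)) = scale_class (k * cis (2 * pi * d)) c"
proof -
  obtain a0 where a0_c: "a0 \<in> c" and a0_qhom: "qhom q d a0"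
    using c(2) unfolding hom_class_def by blast
  have c_a0: "c = jclass I F a0"
    using c(1) a0_c by (rule jac_ring_eq_jclass)
  have a0_poly: "a0 \<in> polys I" and a0_a: "(\<lambda>z. a0 z - a z) \<in> jac_ideal I F"
    using a0_c c(3) unfolding c_a0 jclass_def by auto
  from jac_ideal_diff[OF jac_ideal_zero a0_a] have "(\<lambda>z. a z - a0 z) \<in> jac_ideal I F"
    by simp
  from jac_ideal_act[OF this inv nz hol]
  have "(\<lambda>z. a (act D z) - a0 (act D z)) \<in> jac_ideal I F"
    by simp
  from jac_ideal_cmult[OF this, of k]
  have "(\<lambda>z. k * (a (act D z) - a0 (act D z))) \<in> jac_ideal I F"
    by simp
  moreover have a0_act: "a0 (act D z) = cis (2 * pi * d) * a0 z" for z
  proof -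
    have "a0 (act D z) = a0 (\<lambda>i. cis (2 * pi * q i) * z i)"
      by (rule polys_eq_if_vars_eq[OF a0_poly]) (simp add: act_def D_Fix)
    then show ?thesis
      using qhom_cis[OF a0_poly a0_qhom] by simp
  qed
  ultimately have "(\<lambda>z. k * a (act D z) - (k * cis (2 * pi * d)) * a0 z) \<in> jac_ideal I F"
    by (simp add: right_diff_distrib mult.assoc)
  then have "jclass I F (\<lambda>z. k * a (act D z)) = jclass I F (\<lambda>z. (k * cis (2 * pi * d)) * a0 z)"
    by (rule jclass_eq)
  moreover have "k * cis (2 * pi * d) \<noteq> 0"
    using k by simp
  ultimately show ?thesis
    unfolding c_a0 by (simp add: scale_class_jclass)
qed

lemma det_ratio_eq_cis_shift:
  assumes D: "\<And>i. D i * rho \<nu> h i = cis (2 * pi * q i)"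
  shows "inverse (\<Prod>i\<in>UNIV. D i) * (\<Prod>i\<in>Fix \<nu> h. D i) = cis (2 * pi * shift q \<nu> h)"
proof -
  have D_nz: "D i \<noteq> 0" for i
    using D[of i] by auto
  have D_inv: "inverse (D i) = cis (2 * pi * (\<nu> h i - q i))" for i
  proof -
    have "inverse (D i) = rho \<nu> h i / cis (2 * pi * q i)"
      using D[of i] D_nz by (simp add: field_simps)
    then show ?thesis
      unfolding rho_def by (simp add: cis_divide right_diff_distrib)
  qed
  have "(\<Prod>i\<in>UNIV. D i) = (\<Prod>i\<in>UNIV - Fix \<nu> h. D i) * (\<Prod>i\<in>Fix \<nu> h. D i)"
    by (rule prod.subset_diff) auto
  moreover have "(\<Prod>i\<in>Fix \<nu> h. D i) \<noteq> 0"
    using D_nz by (simp add: prod_zero_iff)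
  ultimately have "inverse (\<Prod>i\<in>UNIV. D i) * (\<Prod>i\<in>Fix \<nu> h. D i)
      = inverse (\<Prod>i\<in>UNIV - Fix \<nu> h. D i)"
    by simp
  also have "\<dots> = (\<Prod>i\<in>UNIV - Fix \<nu> h. inverse (D i))"
    using prod_inversef[of D "UNIV - Fix \<nu> h"] by (simp add: o_def)
  also have "\<dots> = (\<Prod>i\<in>UNIV - Fix \<nu> h. exp (\<i> * complex_of_real (2 * pi * (\<nu> h i - q i))))"
    unfolding D_inv cis_conv_exp by simp
  also have "\<dots> = exp (\<Sum>i\<in>UNIV - Fix \<nu> h. \<i> * complex_of_real (2 * pi * (\<nu> h i - q i)))"
    by (simp add: exp_sum)
  also have "\<dots> = cis (2 * pi * shift q \<nu> h)"
    unfolding cis_conv_exp shift_def by (simp add: sum_distrib_left of_real_sum mult.assoc)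
  finally show ?thesis .
qed

lemma rho_inv_mult:
  assumes "group G" "h \<in> carrier G"
    and rho_hom: "\<forall>g\<in>carrier G. \<forall>h\<in>carrier G. \<forall>i. rho \<nu> (g \<otimes>\<^bsub>G\<^esub> h) i = rho \<nu> g i * rho \<nu> h i"
  shows "rho \<nu> (inv\<^bsub>G\<^esub> h) i * rho \<nu> h i = 1"
proof -
  interpret group G by fact
  have "rho \<nu> \<one>\<^bsub>G\<^esub> i = rho \<nu> \<one>\<^bsub>G\<^esub> i * rho \<nu> \<one>\<^bsub>G\<^esub> i"
    using rho_hom by (metis one_closed l_one)
  then have "rho \<nu> \<one>\<^bsub>G\<^esub> i = 1"
    by (simp add: rho_def)
  then show ?thesis
    using rho_hom assms(2) by (metis inv_closed l_inv)
qed

lemma integer_mod_group_2_hom_parity: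
  assumes "group G" "\<sigma> \<in> hom G (integer_mod_group 2)" "h \<in> carrier G" "j \<in> carrier G"
    and "(\<sigma> h * (\<sigma> j + 1)) mod 2 = 0"
  shows "\<sigma> (inv\<^bsub>G\<^esub> h \<otimes>\<^bsub>G\<^esub> j) * \<sigma> h = 0"
proof -
  interpret group G by fact
  have range: "\<sigma> x \<in> {0, 1}" if "x \<in> carrier G" for x
    using hom_in_carrier[OF assms(2) that] by (auto simp: carrier_integer_mod_group)
  have mult: "\<sigma> (x \<otimes>\<^bsub>G\<^esub> y) = (\<sigma> x + \<sigma> y) mod 2"
    if "x \<in> carrier G" "y \<in> carrier G" for x y
    using hom_mult[OF assms(2) that] by simp
  have "\<sigma> \<one>\<^bsub>G\<^esub> = 0"
    using mult[of "\<one>\<^bsub>G\<^esub>" "\<one>\<^bsub>G\<^esub>"] range[of "\<one>\<^bsub>G\<^esub>"] by auto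
  then have "(\<sigma> (inv\<^bsub>G\<^esub> h) + \<sigma> h) mod 2 = 0"
    using mult[of "inv\<^bsub>G\<^esub> h" h] assms(3) by simp
  then show ?thesis
    using mult[of "inv\<^bsub>G\<^esub> h" j] range[of "inv\<^bsub>G\<^esub> h"] range[of h] range[of j] assms(3-5)
    by auto
qed

lemma phi_hom_class:
  assumes c: "c \<in> A \<nu> f h" "hom_class q d c"
    and f_poly: "f \<in> polys UNIV" and f_inv: "\<And>z. f (act (rho \<nu> g) z) = f z"
    and D_j: "\<And>i. rho \<nu> g i * rho \<nu> h i = cis (2 * pi * q i)"
    and sign: "\<sigma> g * \<sigma> h = 0"
  shows "phi \<nu> \<sigma> f g (h, c) = (h, scale_class (cis (2 * pi * (d + shift q \<nu> h))) c)"
proof -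
  define D where "D = rho \<nu> g"
  define F where "F = restr (Fix \<nu> h) f"
  define k where "k = cis (2 * pi * shift q \<nu> h)"
  have "(-1::complex) ^ nat (\<sigma> g * \<sigma> h) * inverse (\<Prod>i\<in>UNIV. D i) * (\<Prod>i\<in>Fix \<nu> h. D i) = k"
    unfolding sign k_def D_def det_ratio_eq_cis_shift[OF D_j, symmetric] by (simp only: mult.assoc) simp
  then have "phi \<nu> \<sigma> f g (h, c) = (h, jclass (Fix \<nu> h) F (\<lambda>z. k * (SOME a. a \<in> c) (act D z)))"
    unfolding phi_def Let_def D_def F_def by simp
  also have "\<dots> = (h, scale_class (k * cis (2 * pi * d)) c)"
  proof (rule arg_cong[where f = "Pair h"], rule jclass_act_hom_class)
    show "c \<in> jac_ring (Fix \<nu> h) F"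
      using c(1) unfolding A_def F_def .
    show "(SOME a. a \<in> c) \<in> c"
      using c(2) someI[of "\<lambda>a. a \<in> c"] unfolding hom_class_def by blast
    show "F (act D z) = F z" for z
      unfolding F_def D_def using f_inv by (rule restr_act_invariant)
    show "(\<lambda>u. F (z(i := u))) holomorphic_on UNIV" for i z
      unfolding F_def restr_eq_act using polys_act[OF f_poly] by (rule polys_holomorphic_coordinate)
    show "D i = cis (2 * pi * q i)" if "i \<in> Fix \<nu> h" for i
      using D_j[of i] that unfolding D_def by (simp add: Fix_def rho_def)
  qed (use c(2) in \<open>auto simp: D_def rho_def k_def\<close>)
  finally show ?thesis
    unfolding k_def by (simp add: cis_mult distrib_left add.commute)
qed

theorem mainTheorem2:
  fixes G :: "('g, 'b) monoid_scheme"
    and q :: "'n::finite \<Rightarrow> real"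
    and f :: "('n \<Rightarrow> complex) \<Rightarrow> complex"
    and \<nu> :: "'g \<Rightarrow> 'n \<Rightarrow> real"
    and \<sigma> :: "'g \<Rightarrow> int"
    and j :: 'g
  assumes weights: "\<forall>i. 0 < q i \<and> q i < 1"
    and f_poly: "f \<in> polys UNIV"
    and f_qhom: "qhom q 1 f"
    and f_crit: "\<forall>i. pd i f (\<lambda>_. 0) = 0"
    and f_isolated: "\<exists>\<epsilon>>0. \<forall>z. z \<noteq> (\<lambda>_. 0) \<and> (\<forall>i. cmod (z i) < \<epsilon>) \<longrightarrow> (\<exists>i. pd i f z \<noteq> 0)"
    and G_group: "comm_group G" and G_fin: "finite (carrier G)"
    and nu_range: "\<forall>g\<in>carrier G. \<forall>i. 0 \<le> \<nu> g i \<and> \<nu> g i < 1"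
    and rho_hom: "\<forall>g\<in>carrier G. \<forall>h\<in>carrier G. \<forall>i. rho \<nu> (g \<otimes>\<^bsub>G\<^esub> h) i = rho \<nu> g i * rho \<nu> h i"
    and f_inv: "\<forall>g\<in>carrier G. \<forall>z. f (act (rho \<nu> g) z) = f z"
    and j_mem: "j \<in> carrier G"
    and j_rho: "\<forall>i. rho \<nu> j i = cis (2 * pi * q i)"
    and sigma_hom: "\<sigma> \<in> hom G (integer_mod_group 2)"
    and sigma_cond: "\<forall>h\<in>carrier G. (\<sigma> h * (\<sigma> j + 1)) mod 2 = 0"
  shows "(\<forall>h\<in>carrier G. \<forall>d c. c \<in> A \<nu> f h \<and> hom_class q d c \<longrightarrow>
            phi \<nu> \<sigma> f (inv\<^bsub>G\<^esub> h \<otimes>\<^bsub>G\<^esub> j) (h, c)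
              = (h, scale_class (cis (2 * pi * (d + shift q \<nu> h))) c))
         \<and> G_Euler G q \<nu> \<sigma> f"
proof -
  interpret comm_group G by (rule G_group)
  have "phi \<nu> \<sigma> f (inv\<^bsub>G\<^esub> h \<otimes>\<^bsub>G\<^esub> j) (h, c)
      = (h, scale_class (cis (2 * pi * (d + shift q \<nu> h))) c)"
    if h: "h \<in> carrier G" and c: "c \<in> A \<nu> f h" "hom_class q d c" for h d c
  proof (rule phi_hom_class[OF c f_poly])
    show "f (act (rho \<nu> (inv\<^bsub>G\<^esub> h \<otimes>\<^bsub>G\<^esub> j)) z) = f z" for z
      using f_inv h j_mem by simp
    show "rho \<nu> (inv\<^bsub>G\<^esub> h \<otimes>\<^bsub>G\<^esub> j) i * rho \<nu> h i = cis (2 * pi * q i)" for i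
      using rho_hom rho_inv_mult[OF is_group h rho_hom] h j_mem j_rho by (simp add: mult.commute)
    show "\<sigma> (inv\<^bsub>G\<^esub> h \<otimes>\<^bsub>G\<^esub> j) * \<sigma> h = 0"
      using sigma_cond h by (intro integer_mod_group_2_hom_parity[OF is_group sigma_hom h j_mem]) simp
  qed
  moreover have "\<forall>g\<in>carrier G. g \<otimes>\<^bsub>G\<^esub> j = j \<otimes>\<^bsub>G\<^esub> g"
    using j_mem m_comm by blast
  ultimately show ?thesis
    unfolding G_Euler_def using j_mem by blast
qed

end
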